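(* Every finite-dimensional complex regular evolution algebra $\mathcal{E}$ admits a non-zero idempotent, i.e. an element $u\neq 0$ with $u^2=u$.
   Context: An evolution algebra over $\mathbb{C}$ is a $\mathbb{C}$-algebra $\mathcal{E}$ admitting a basis $\{e_1,\dots,e_n\}$ (a natural basis) such that $e_ie_j=0$ for all $i\neq j$. $\mathcal{E}$ is regular if $\mathcal{E}=\mathcal{E}^2$, equivalently the structure matrix $(a_{ij})$ defined by $e_i^2=\sum_j a_{ij}e_j$ is invertible. *)

theory Defs
  imports "HOL-Analysis.Analysis"
begin

text \<open>An n-dimensional complex evolution algebra, written in coordinates w.r.t. a natural
basis e_1..e_n (the standard basis of complex^'n, index type 'n of cardinality n).
The structure matrix A has entries A$i$j = a_ij, where e_i e_i = sum_j a_ij e_j and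
e_i e_j = 0 for i distinct from j.  Extending bilinearly, the product of x and y is
sum_i x_i y_i (e_i e_i), whose j-th coordinate is sum_i x_i y_i a_ij.\<close>

definition evol_mult :: "complex^'n^'n \<Rightarrow> complex^'n \<Rightarrow> complex^'n \<Rightarrow> complex^'n" where
  "evol_mult A x y = (\<chi> j. \<Sum>i\<in>UNIV. x$i * y$i * A$i$j)"

text \<open>Regular: the structure matrix is invertible (equivalently E = E^2).\<close>
definition evol_regular :: "complex^'n^'n \<Rightarrow> bool" where
  "evol_regular A \<longleftrightarrow> invertible A"

end

theory Submission
  imports Defs "HOL-Computational_Algebra.Fundamental_Theorem_Algebra"
begin

text \<open>
  Let \<open>B\<close> be the transpose of the inverse of the structure matrix \<open>A\<close> and let \<open>R\<close> be the
  commutative algebra \<open>\<complex>[x\<^sub>1, ..., x\<^sub>n] / (x\<^sub>i\<^sup>2 - \<Sum>\<^sub>l B\<^sub>i\<^sub>l x\<^sub>l)\<close>. It is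
  finite-dimensional, being spanned by the square-free monomials, and the relations can be
  inverted to \<open>x\<^sub>j = \<Sum>\<^sub>i A\<^sub>i\<^sub>j x\<^sub>i\<^sup>2\<close>. The multiplication operators by the \<open>x\<^sub>k\<close> on \<open>R\<close>
  commute, so they have common eigenvectors, and their eigenvalues \<open>u\<^sub>k\<close> on one of them satisfy
  \<open>u\<^sub>j = \<Sum>\<^sub>i A\<^sub>i\<^sub>j u\<^sub>i\<^sup>2\<close>, i.e. \<open>u u = u\<close> in the evolution algebra. To get \<open>u \<noteq> 0\<close>: if no \<open>x\<^sub>k\<close> had
  a nonzero eigenvalue, all would be nilpotent; but the relation \<open>x\<^sub>j = \<Sum>\<^sub>i A\<^sub>i\<^sub>j x\<^sub>i\<^sup>2\<close> writes
  every word in the \<open>x\<^sub>k\<close> as a combination of longer ones, and long words vanish, so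
  \<open>x\<^sub>j = 0\<close>, which is absurd. Hence some \<open>x\<^sub>k\<close> has an eigenvalue \<open>\<mu> \<noteq> 0\<close>, and a common
  eigenvector inside its \<open>\<mu>\<close>-eigenspace yields \<open>u\<^sub>k = \<mu>\<close>.
\<close>

definition poly_apply :: "('a::field^'m \<Rightarrow> 'a^'m) \<Rightarrow> 'a poly \<Rightarrow> 'a^'m \<Rightarrow> 'a^'m" where
  "poly_apply f p v = (\<Sum>i\<le>degree p. coeff p i *s (f ^^ i) v)"

lemma poly_apply_conv_sum:
  "degree p \<le> n \<Longrightarrow> poly_apply f p v = (\<Sum>i\<le>n. coeff p i *s (f ^^ i) v)"
  unfolding poly_apply_def by (rule sum.mono_neutral_left) (auto simp: coeff_eq_0)

lemma poly_apply_commute: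
  assumes "Vector_Spaces.linear (*s) (*s) f"
  shows "f (poly_apply f p v) = poly_apply f p (f v)"
  unfolding poly_apply_def
  by (simp add: vec.linear_sum[OF assms] vec.linear_scale[OF assms] funpow_swap1)

lemma poly_apply_linear_factor:
  assumes "Vector_Spaces.linear (*s) (*s) f"
  shows "poly_apply f ([:-r, 1:] * q) v = f (poly_apply f q v) - r *s poly_apply f q v"
proof -
  let ?n = "degree q"
  have "degree ([:-r, 1:] * q) \<le> Suc ?n"
    using degree_mult_le[of "[:-r, 1:]" q] by simp
  then have "poly_apply f ([:-r, 1:] * q) v
      = (\<Sum>i\<le>Suc ?n. coeff (pCons 0 q - smult r q) i *s (f ^^ i) v)"
    by (simp add: poly_apply_conv_sum mult_pCons_left)
  also have "\<dots> = (\<Sum>i\<le>Suc ?n. coeff (pCons 0 q) i *s (f ^^ i) v)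
                    - r *s (\<Sum>i\<le>Suc ?n. coeff q i *s (f ^^ i) v)"
    by (simp add: vector_sub_rdistrib sum_subtractf vec.scale_sum_right vector_smult_assoc)
  also have "(\<Sum>i\<le>Suc ?n. coeff (pCons 0 q) i *s (f ^^ i) v) = f (poly_apply f q v)"
    by (subst sum.atMost_Suc_shift)
       (simp add: poly_apply_def vec.linear_sum[OF assms] vec.linear_scale[OF assms])
  also have "(\<Sum>i\<le>Suc ?n. coeff q i *s (f ^^ i) v) = poly_apply f q v"
    by (rule poly_apply_conv_sum[symmetric]) simp
  finally show ?thesis .
qed

lemma funpow_in_invariant: "f ` E \<subseteq> E \<Longrightarrow> v \<in> E \<Longrightarrow> (f ^^ i) v \<in> E"
  by (induction i) auto

lemma poly_apply_in_subspace:
  assumes "vec.subspace E" "f ` E \<subseteq> E" "v \<in> E"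
  shows "poly_apply f p v \<in> E"
  unfolding poly_apply_def
  by (intro vec.subspace_sum[OF assms(1)] vec.subspace_scale[OF assms(1)]
            funpow_in_invariant[OF assms(2,3)])

lemma complex_poly_linear_factor:
  fixes p :: "complex poly"
  assumes "degree p > 0"
  obtains r q where "p = [:-r, 1:] * q" "q \<noteq> 0" "degree p = Suc (degree q)"
proof -
  have "\<not> constant (poly p)"
    using assms constant_degree[of p] by simp
  then obtain r where "poly p r = 0"
    using fundamental_theorem_of_algebra by blast
  then obtain q where pq: "p = [:-r, 1:] * q"
    by (auto simp: poly_eq_0_iff_dvd elim: dvdE)
  with assms have "q \<noteq> 0" by auto
  with pq have "degree p = Suc (degree q)"
    by (simp add: degree_mult_eq del: mult_pCons_left)
  with pq \<open>q \<noteq> 0\<close> show ?thesis using that by blast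
qed

lemma exists_nontrivial_combination_eq_0:
  fixes g :: "'i \<Rightarrow> 'a::field^'m"
  assumes "finite I" "CARD('m) < card I"
  obtains c where "\<exists>i\<in>I. c i \<noteq> 0" "(\<Sum>i\<in>I. c i *s g i) = 0"
proof (cases "inj_on g I")
  case True
  have "vec.dependent (g ` I)"
  proof (rule ccontr)
    assume "\<not> vec.dependent (g ` I)"
    then have "card (g ` I) \<le> vec.dim (g ` I)"
      by (simp add: vec.independent_bound_general)
    also have "\<dots> \<le> CARD('m)"
      by (rule dim_subset_UNIV_cart_gen)
    finally show False
      using True assms(2) by (simp add: card_image)
  qed
  then obtain u where u: "\<exists>x\<in>g ` I. u x \<noteq> 0" "(\<Sum>x\<in>g ` I. u x *s x) = 0"
    unfolding vec.dependent_finite[OF finite_imageI[OF assms(1)]] by blast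
  show ?thesis
  proof (rule that[of "u \<circ> g"])
    show "\<exists>i\<in>I. (u \<circ> g) i \<noteq> 0"
      using u(1) by auto
    show "(\<Sum>i\<in>I. (u \<circ> g) i *s g i) = 0"
      using u(2) unfolding sum.reindex[OF True] comp_def .
  qed
next
  case False
  then obtain i j where ij: "i \<in> I" "j \<in> I" "i \<noteq> j" "g i = g j"
    unfolding inj_on_def by blast
  let ?c = "\<lambda>k. if k = i then (1::'a) else if k = j then -1 else 0"
  show ?thesis
  proof (rule that[of ?c])
    show "\<exists>k\<in>I. ?c k \<noteq> 0"
      using ij(1) by auto
    have "(\<Sum>k\<in>I. ?c k *s g k) = (\<Sum>k\<in>I. if k = i then g i else 0) - (\<Sum>k\<in>I. if k = j then g j else 0)"
      unfolding sum_subtractf[symmetric] by (rule sum.cong) (use ij in auto)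
    then show "(\<Sum>k\<in>I. ?c k *s g k) = 0"
      using ij assms(1) by simp
  qed
qed

lemma exists_annihilating_poly:
  fixes f :: "'a::field^'m \<Rightarrow> 'a^'m"
  obtains p where "p \<noteq> 0" "degree p \<le> CARD('m)" "poly_apply f p v = 0"
proof -
  let ?N = "CARD('m)"
  obtain c where c: "\<exists>i\<in>{..?N}. c i \<noteq> 0" "(\<Sum>i\<le>?N. c i *s (f ^^ i) v) = 0"
    using exists_nontrivial_combination_eq_0[of "{..?N}" "\<lambda>i. (f ^^ i) v"] by auto
  define p where "p = (\<Sum>i\<le>?N. monom (c i) i)"
  have coeff_p: "coeff p i = (if i \<le> ?N then c i else 0)" for i
    by (simp add: p_def coeff_sum coeff_monom)
  obtain i where "i \<le> ?N" "c i \<noteq> 0"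
    using c(1) by auto
  then have "p \<noteq> 0"
    using coeff_p[of i] by auto
  moreover have deg: "degree p \<le> ?N"
    by (rule degree_le) (simp add: coeff_p)
  moreover have "poly_apply f p v = 0"
    using c(2) by (simp add: poly_apply_conv_sum[OF deg] coeff_p)
  ultimately show ?thesis using that by blast
qed

lemma poly_apply_eq_0_imp_nilpotent_or_eigenvector:
  fixes f :: "complex^'m \<Rightarrow> complex^'m"
  assumes lin: "Vector_Spaces.linear (*s) (*s) f" and E: "vec.subspace E" "f ` E \<subseteq> E"
  shows "p \<noteq> 0 \<Longrightarrow> v \<in> E \<Longrightarrow> poly_apply f p v = 0 \<Longrightarrow>
    (f ^^ degree p) v = 0 \<or> (\<exists>w\<in>E. \<exists>r. w \<noteq> 0 \<and> r \<noteq> 0 \<and> f w = r *s w)"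
proof (induction "degree p" arbitrary: p v rule: less_induct)
  case less
  show ?case
  proof (cases "degree p = 0")
    case True
    then obtain c where "p = [:c:]"
      by (metis degree_eq_zeroE)
    with less.prems have "v = 0"
      by (simp add: poly_apply_def)
    with True show ?thesis by simp
  next
    case False
    then obtain r q where pq: "p = [:-r, 1:] * q" "q \<noteq> 0" and deg: "degree p = Suc (degree q)"
      using complex_poly_linear_factor by blast
    let ?w = "poly_apply f q v"
    have "f ?w - r *s ?w = 0"
      using less.prems(3) unfolding pq(1) poly_apply_linear_factor[OF lin] .
    then have fw: "f ?w = r *s ?w"
      by simp
    have IH: "(f ^^ degree q) u = 0 \<or> (\<exists>w\<in>E. \<exists>r. w \<noteq> 0 \<and> r \<noteq> 0 \<and> f w = r *s w)"
      if "u \<in> E" "poly_apply f q u = 0" for u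
      using less.hyps[of q u] deg pq(2) that by simp
    consider "r = 0" | "r \<noteq> 0" "?w = 0" | "r \<noteq> 0" "?w \<noteq> 0"
      by blast
    then show ?thesis
    proof cases
      case 1
      \<comment> \<open>then \<open>f\<close> kills \<open>q(f) v\<close>, so \<open>q\<close> annihilates \<open>f v\<close>\<close>
      have "poly_apply f q (f v) = 0"
        using fw 1 by (simp add: poly_apply_commute[OF lin])
      moreover have "f v \<in> E"
        using E(2) less.prems(2) by blast
      ultimately show ?thesis
        using IH deg by (auto simp: funpow_Suc_right simp del: funpow.simps)
    next
      case 2
      then show ?thesis
        using IH[OF less.prems(2)] deg by (auto simp: vec.linear_0[OF lin])
    next
      case 3
      then show ?thesis
        using fw poly_apply_in_subspace[OF E less.prems(2)] by blast
    qed
  qed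
qed

lemma funpow_eq_0_imp_kernel_element:
  assumes "(f ^^ n) v = 0" "v \<noteq> 0"
  shows "\<exists>i. (f ^^ i) v \<noteq> 0 \<and> f ((f ^^ i) v) = 0"
  using assms
proof (induction n arbitrary: v)
  case 0
  then show ?case by simp
next
  case (Suc n)
  show ?case
  proof (cases "f v = 0")
    case True
    with Suc.prems show ?thesis
      by (intro exI[of _ 0]) simp
  next
    case False
    then obtain i where "(f ^^ i) (f v) \<noteq> 0" "f ((f ^^ i) (f v)) = 0"
      using Suc.IH[of "f v"] Suc.prems(1) by (auto simp: funpow_Suc_right simp del: funpow.simps)
    then show ?thesis
      by (intro exI[of _ "Suc i"]) (simp add: funpow_Suc_right del: funpow.simps)
  qed
qed

lemma eigenvector_in_invariant_subspace:
  fixes f :: "complex^'m \<Rightarrow> complex^'m"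
  assumes lin: "Vector_Spaces.linear (*s) (*s) f" and E: "vec.subspace E" "f ` E \<subseteq> E"
    and "v \<in> E" "v \<noteq> 0"
  obtains w r where "w \<in> E" "w \<noteq> 0" "f w = r *s w"
proof -
  obtain p where "p \<noteq> 0" "poly_apply f p v = 0"
    using exists_annihilating_poly by metis
  then consider "(f ^^ degree p) v = 0" | "\<exists>w\<in>E. \<exists>r. w \<noteq> 0 \<and> f w = r *s w"
    using poly_apply_eq_0_imp_nilpotent_or_eigenvector[OF lin E] \<open>v \<in> E\<close> by blast
  then show thesis
  proof cases
    case 1
    then obtain i where "(f ^^ i) v \<noteq> 0" "f ((f ^^ i) v) = 0"
      using funpow_eq_0_imp_kernel_element \<open>v \<noteq> 0\<close> by blast
    moreover have "(f ^^ i) v \<in> E"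
      using funpow_in_invariant[OF E(2) \<open>v \<in> E\<close>] .
    ultimately show thesis
      using that[of "(f ^^ i) v" 0] by simp
  next
    case 2
    then show thesis
      using that by blast
  qed
qed

lemma nilpotent_if_no_nonzero_eigenvalue:
  fixes f :: "complex^'m \<Rightarrow> complex^'m"
  assumes lin: "Vector_Spaces.linear (*s) (*s) f"
    and no_eig: "\<And>w r. w \<noteq> 0 \<Longrightarrow> f w = r *s w \<Longrightarrow> r = 0"
  shows "(f ^^ CARD('m)) v = 0"
proof -
  obtain p where p: "p \<noteq> 0" "degree p \<le> CARD('m)" "poly_apply f p v = 0"
    using exists_annihilating_poly by metis
  then have "(f ^^ degree p) v = 0"
    using poly_apply_eq_0_imp_nilpotent_or_eigenvector[OF lin vec.subspace_UNIV] no_eig by blast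
  moreover have "(f ^^ k) 0 = 0" for k
    by (induction k) (simp_all add: vec.linear_0[OF lin])
  ultimately have "(f ^^ (CARD('m) - degree p)) ((f ^^ degree p) v) = 0"
    by simp
  with p(2) show ?thesis
    by (simp add: funpow_add[symmetric, THEN fun_cong, simplified comp_def])
qed

lemma eigenspace_subspace:
  fixes f :: "'a::field^'m \<Rightarrow> 'a^'m"
  assumes "Vector_Spaces.linear (*s) (*s) f"
  shows "vec.subspace {y. f y = r *s y}"
  unfolding vec.subspace_def
  by (simp add: vec.linear_0[OF assms] vec.linear_add[OF assms] vec.linear_scale[OF assms]
                vec.scale_right_distrib vec.scale_left_commute)

lemma commuting_map_preserves_eigenspace:
  fixes f g :: "'a::field^'m \<Rightarrow> 'a^'m"
  assumes "Vector_Spaces.linear (*s) (*s) g" "\<And>v. f (g v) = g (f v)"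
  shows "g ` {y. f y = r *s y} \<subseteq> {y. f y = r *s y}"
  by (auto simp: assms(2) vec.linear_scale[OF assms(1)])

lemma common_eigenvector:
  fixes x :: "'k \<Rightarrow> complex^'m \<Rightarrow> complex^'m"
  assumes lin: "\<And>k. Vector_Spaces.linear (*s) (*s) (x k)"
    and comm: "\<And>k l v. x k (x l v) = x l (x k v)"
  shows "finite K \<Longrightarrow> vec.subspace E \<Longrightarrow> (\<And>k. x k ` E \<subseteq> E) \<Longrightarrow> v \<in> E \<Longrightarrow> v \<noteq> 0 \<Longrightarrow>
    \<exists>w\<in>E. \<exists>c. w \<noteq> 0 \<and> (\<forall>k\<in>K. x k w = c k *s w)"
proof (induction K arbitrary: E v rule: finite_induct)
  case empty
  then show ?case by blast
next
  case (insert j K)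
  obtain w r where w: "w \<in> E" "w \<noteq> 0" "x j w = r *s w"
    using eigenvector_in_invariant_subspace[OF lin insert.prems(1,2)] insert.prems(3,4) by metis
  define E' where "E' = E \<inter> {y. x j y = r *s y}"
  have sub: "vec.subspace E'"
    unfolding E'_def by (intro vec.subspace_inter insert.prems(1) eigenspace_subspace lin)
  have inv: "x k ` E' \<subseteq> E'" for k
    using insert.prems(2)
      commuting_map_preserves_eigenspace[where f = "x j" and g = "x k", OF lin comm]
    unfolding E'_def by blast
  have "w \<in> E'"
    using w by (simp add: E'_def)
  then obtain z c where z: "z \<in> E'" "z \<noteq> 0" "\<forall>k\<in>K. x k z = c k *s z"
    using insert.IH[OF sub inv _ w(2)] by blast
  then have "z \<in> E" "\<forall>k\<in>insert j K. x k z = (c(j := r)) k *s z"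
    by (auto simp: E'_def)
  with z(2) show ?case
    by blast
qed

text \<open>
  The vector space \<open>'a^('n set)\<close> models the quotient algebra
  \<open>'a[x\<^sub>k | k \<in> 'n] / (x\<^sub>i\<^sup>2 - (\<Sum>l. B $ i $ l x\<^sub>l))\<close> in its basis of square-free monomials
  \<open>x\<^sub>T = axis T 1\<close>: \<open>monom_times B k T\<close> is the product \<open>x\<^sub>k x\<^sub>T\<close>, and \<open>gen_times B k\<close> is
  multiplication by \<open>x\<^sub>k\<close>.
\<close>

function monom_times :: "'a::field^'n^'n \<Rightarrow> 'n \<Rightarrow> 'n set \<Rightarrow> 'a^('n set)" where
  "monom_times B k T =
    (if k \<in> T then (\<Sum>l\<in>UNIV. B $ k $ l *s monom_times B l (T - {k})) else axis (insert k T) 1)"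
  by auto
termination
  by (relation "Wellfounded.measure (\<lambda>(B, k, T). card T)")
     (auto intro!: diff_less simp: card_gt_0_iff)

declare monom_times.simps [simp del]

lemma monom_times_notin: "k \<notin> T \<Longrightarrow> monom_times B k T = axis (insert k T) 1"
  by (simp add: monom_times.simps)

lemma monom_times_in:
  "k \<in> T \<Longrightarrow> monom_times B k T = (\<Sum>l\<in>UNIV. B $ k $ l *s monom_times B l (T - {k}))"
  by (simp add: monom_times.simps)

definition gen_times :: "'a::field^'n^'n \<Rightarrow> 'n \<Rightarrow> 'a^('n set) \<Rightarrow> 'a^('n set)" where
  "gen_times B k v = (\<Sum>T\<in>UNIV. v $ T *s monom_times B k T)"

lemma linear_gen_times: "Vector_Spaces.linear (*s) (*s) (gen_times B k)"
  by (auto simp: Vector_Spaces.linear_iff vec.vector_space_axioms gen_times_def vector_sadd_rdistrib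
                 sum.distrib vec.scale_sum_right)

lemma gen_times_sum: "gen_times B k (\<Sum>i\<in>I. c i *s v i) = (\<Sum>i\<in>I. c i *s gen_times B k (v i))"
  by (simp add: vec.linear_sum[OF linear_gen_times] vec.linear_scale[OF linear_gen_times])

lemma gen_times_axis: "gen_times B k (axis T 1) = monom_times B k T"
proof -
  have "gen_times B k (axis T 1) = (\<Sum>S\<in>UNIV. if S = T then monom_times B k T else 0)"
    unfolding gen_times_def by (intro sum.cong) (auto simp: axis_def)
  then show ?thesis by simp
qed

lemma gen_times_monom_times_expand:
  assumes "j \<in> T"
    and IH: "\<And>S k l. S \<subset> T \<Longrightarrow>
      gen_times B k (monom_times B l S) = gen_times B l (monom_times B k S)"
  shows "gen_times B i (monom_times B j T)
    = (\<Sum>l\<in>UNIV. B $ j $ l *s gen_times B l (monom_times B i (T - {j})))"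
proof -
  have "T - {j} \<subset> T"
    using assms(1) by auto
  with assms(1) show ?thesis
    by (simp add: monom_times_in gen_times_sum IH)
qed

lemma gen_times_monom_times_commute_one_in:
  assumes "i \<notin> T" "j \<in> T"
    and IH: "\<And>S k l. S \<subset> T \<Longrightarrow>
      gen_times B k (monom_times B l S) = gen_times B l (monom_times B k S)"
  shows "gen_times B i (monom_times B j T) = gen_times B j (monom_times B i T)"
proof -
  have "gen_times B i (monom_times B j T)
      = (\<Sum>l\<in>UNIV. B $ j $ l *s monom_times B l (insert i (T - {j})))"
    using assms by (simp add: gen_times_monom_times_expand monom_times_notin gen_times_axis)
  also have "\<dots> = gen_times B j (monom_times B i T)"
    using assms(1,2)
    by (auto simp: monom_times_notin gen_times_axis monom_times_in insert_Diff_if)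
  finally show ?thesis .
qed

lemma gen_times_monom_times_commute_both_in:
  assumes "i \<in> T" "j \<in> T" "i \<noteq> j"
    and IH: "\<And>S k l. S \<subset> T \<Longrightarrow>
      gen_times B k (monom_times B l S) = gen_times B l (monom_times B k S)"
  shows "gen_times B i (monom_times B j T) = gen_times B j (monom_times B i T)"
proof -
  let ?x = "gen_times B" and ?m = "monom_times B" and ?S = "T - {i, j}"
  have double:
    "?x i (?m j T) = (\<Sum>l\<in>UNIV. \<Sum>m\<in>UNIV. (B $ j $ l * B $ i $ m) *s ?x l (?m m (T - {i, j})))"
    if "i \<in> T" "j \<in> T" "i \<noteq> j" for i j
  proof -
    have "T - {j} - {i} = T - {i, j}"
      by auto
    with that have "?m i (T - {j}) = (\<Sum>m\<in>UNIV. B $ i $ m *s ?m m (T - {i, j}))"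
      by (simp add: monom_times_in)
    with that IH show ?thesis
      by (simp add: gen_times_monom_times_expand gen_times_sum vec.scale_sum_right
                    vector_smult_assoc)
  qed
  have "?S \<subset> T"
    using assms(1) by auto
  then have swap: "?x l (?m m ?S) = ?x m (?m l ?S)" for l m
    using IH by blast
  have "?x i (?m j T) = (\<Sum>l\<in>UNIV. \<Sum>m\<in>UNIV. (B $ j $ l * B $ i $ m) *s ?x m (?m l ?S))"
    using assms(1-3) by (simp add: double swap)
  also have "\<dots> = (\<Sum>m\<in>UNIV. \<Sum>l\<in>UNIV. (B $ i $ m * B $ j $ l) *s ?x m (?m l ?S))"
    by (subst sum.swap) (simp add: mult.commute)
  also have "\<dots> = ?x j (?m i T)"
    using assms(1-3) by (simp add: double insert_commute)
  finally show ?thesis .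
qed

lemma gen_times_monom_times_commute:
  "gen_times B i (monom_times B j T) = gen_times B j (monom_times B i T)"
  using finite[of T]
proof (induction T arbitrary: i j rule: finite_psubset_induct)
  case (psubset T)
  consider "i = j" | "i \<notin> T" "j \<notin> T" "i \<noteq> j" | "i \<notin> T" "j \<in> T" | "i \<in> T" "j \<notin> T"
    | "i \<in> T" "j \<in> T" "i \<noteq> j"
    by blast
  then show ?case
  proof cases
    case 1
    then show ?thesis by simp
  next
    case 2
    then show ?thesis
      by (simp add: monom_times_notin gen_times_axis insert_commute)
  next
    case 3
    from 3 psubset.IH show ?thesis
      by (rule gen_times_monom_times_commute_one_in)
  next
    case 4
    from 4(2,1) psubset.IH show ?thesis
      by (rule gen_times_monom_times_commute_one_in[symmetric])
  next
    case 5
    from 5 psubset.IH show ?thesis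
      by (rule gen_times_monom_times_commute_both_in)
  qed
qed

lemma gen_times_commute: "gen_times B i (gen_times B j v) = gen_times B j (gen_times B i v)"
  by (simp add: gen_times_def[of B j v] gen_times_def[of B i v] gen_times_sum
                gen_times_monom_times_commute)

lemma gen_times_square: "gen_times B j (gen_times B j v) = (\<Sum>l\<in>UNIV. B $ j $ l *s gen_times B l v)"
proof -
  have square_monom:
    "gen_times B j (monom_times B j T) = (\<Sum>l\<in>UNIV. B $ j $ l *s monom_times B l T)" for T
  proof (cases "j \<in> T")
    case True
    have "gen_times B j (monom_times B j T)
        = (\<Sum>l\<in>UNIV. B $ j $ l *s gen_times B l (monom_times B j (T - {j})))"
      using True by (simp add: monom_times_in gen_times_sum gen_times_monom_times_commute)
    with True show ?thesis
      by (simp add: monom_times_notin gen_times_axis insert_absorb)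
  next
    case False
    then show ?thesis
      by (simp add: monom_times_notin gen_times_axis monom_times_in)
  qed
  have "gen_times B j (gen_times B j v)
      = (\<Sum>T\<in>UNIV. v $ T *s (\<Sum>l\<in>UNIV. B $ j $ l *s monom_times B l T))"
    by (simp add: gen_times_def[of B j v] gen_times_sum square_monom)
  also have "\<dots> = (\<Sum>l\<in>UNIV. B $ j $ l *s gen_times B l v)"
    unfolding gen_times_def vec.scale_sum_right vector_smult_assoc
    by (subst sum.swap) (simp add: mult.commute)
  finally show ?thesis .
qed

lemma gen_times_one: "gen_times B j (axis {} 1) = axis {j} 1"
  by (simp add: gen_times_axis monom_times_notin)

lemma gen_times_eq_sum_squares:
  assumes "A' ** A = mat 1"
  shows "gen_times (transpose A') j v
    = (\<Sum>i\<in>UNIV. A $ i $ j *s gen_times (transpose A') i (gen_times (transpose A') i v))"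
proof -
  let ?x = "gen_times (transpose A')"
  have "(\<Sum>i\<in>UNIV. A $ i $ j *s ?x i (?x i v))
      = (\<Sum>i\<in>UNIV. \<Sum>l\<in>UNIV. (A' $ l $ i * A $ i $ j) *s ?x l v)"
    by (simp add: gen_times_square transpose_def vec.scale_sum_right vector_smult_assoc
                  mult.commute)
  also have "\<dots> = (\<Sum>l\<in>UNIV. (A' ** A) $ l $ j *s ?x l v)"
    by (subst sum.swap) (simp add: matrix_matrix_mult_def vec.scale_sum_left)
  also have "\<dots> = ?x j v"
    using assms by (simp add: mat_def if_distrib[of "\<lambda>c. c *s ?x _ v"] cong: if_cong)
  finally show ?thesis ..
qed

lemma foldr_commuting_count_list:
  assumes comm: "\<And>k l v. x k (x l v) = x l (x k v)"
  shows "foldr x ks w = (x k ^^ count_list ks k) (foldr x (filter (\<lambda>l. l \<noteq> k) ks) w)"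
proof (induction ks)
  case Nil
  then show ?case by simp
next
  case (Cons l ks)
  have "x l ((x k ^^ c) u) = (x k ^^ c) (x l u)" for c u
    by (induction c) (simp_all add: comm[of l k])
  with Cons.IH show ?case
    by (simp add: funpow_swap1)
qed

lemma exists_count_list_ge:
  fixes ks :: "'n::finite list"
  assumes "CARD('n) * D \<le> length ks"
  shows "\<exists>k. D \<le> count_list ks k"
proof (rule ccontr)
  assume "\<not> ?thesis"
  then have "length ks < (\<Sum>k\<in>(UNIV :: 'n set). D)"
    using sum_count_set[of ks UNIV] sum_strict_mono[of "UNIV :: 'n set" "count_list ks" "\<lambda>_. D"]
    by (simp add: not_le)
  with assms show False
    by simp
qed

lemma commuting_nilpotent_quadratic_family_eq_0:
  fixes x :: "'n::finite \<Rightarrow> 'a::field^'m \<Rightarrow> 'a^'m"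
  assumes lin: "\<And>k. Vector_Spaces.linear (*s) (*s) (x k)"
    and comm: "\<And>k l v. x k (x l v) = x l (x k v)"
    and nil: "\<And>k v. (x k ^^ D) v = 0"
    and quad: "\<And>j v. x j v = (\<Sum>i\<in>UNIV. a i j *s x i (x i v))"
  shows "x j v = 0"
proof -
  have long_word: "foldr x ks w = 0" if long: "CARD('n) * D \<le> length ks" for ks w
  proof -
    obtain k where k: "D \<le> count_list ks k"
      using exists_count_list_ge[OF long] by blast
    let ?u = "foldr x (filter (\<lambda>l. l \<noteq> k) ks) w"
    have "foldr x ks w = (x k ^^ (count_list ks k - D)) ((x k ^^ D) ?u)"
      using foldr_commuting_count_list[of x, OF comm, of ks w k] k
      by (metis funpow_add le_add_diff_inverse2 o_apply)
    moreover have "(x k ^^ c) 0 = 0" for c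
      by (induction c) (simp_all add: vec.linear_0[OF lin])
    ultimately show ?thesis
      by (simp add: nil)
  qed
  \<comment> \<open>the quadratic relation rewrites a word into a combination of strictly longer words\<close>
  have "foldr x ks w = 0" if "ks \<noteq> []" "CARD('n) * D \<le> length ks + m" for m ks w
    using that
  proof (induction m arbitrary: ks)
    case 0
    then show ?case
      using long_word by simp
  next
    case (Suc m)
    then obtain j ks' where ks: "ks = j # ks'"
      by (cases ks) auto
    have "foldr x ks w = (\<Sum>i\<in>UNIV. a i j *s foldr x (i # i # ks') w)"
      unfolding ks foldr.simps o_apply by (rule quad)
    also have "\<dots> = 0"
      using Suc.IH[of "_ # _ # ks'"] Suc.prems by (simp add: ks)
    finally show ?case .
  qed
  from this[of "[j]" "CARD('n) * D"] show ?thesis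
    by simp
qed

lemma commuting_quadratic_family_nonzero_eigenvalue:
  fixes x :: "'n::finite \<Rightarrow> complex^'m \<Rightarrow> complex^'m"
  assumes lin: "\<And>k. Vector_Spaces.linear (*s) (*s) (x k)"
    and comm: "\<And>k l v. x k (x l v) = x l (x k v)"
    and quad: "\<And>j v. x j v = (\<Sum>i\<in>UNIV. a i j *s x i (x i v))"
    and "x j v \<noteq> 0"
  obtains k w \<mu> where "w \<noteq> 0" "x k w = \<mu> *s w" "\<mu> \<noteq> 0"
proof (rule ccontr)
  assume "\<not> thesis"
  then have "(x k ^^ CARD('m)) u = 0" for k u
    using nilpotent_if_no_nonzero_eigenvalue[OF lin] that by metis
  then have "x j v = 0"
    by (rule commuting_nilpotent_quadratic_family_eq_0[OF lin comm _ quad])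
  with \<open>x j v \<noteq> 0\<close> show False ..
qed

lemma common_eigenvector_in_eigenspace:
  fixes x :: "'n::finite \<Rightarrow> complex^'m \<Rightarrow> complex^'m"
  assumes lin: "\<And>k. Vector_Spaces.linear (*s) (*s) (x k)"
    and comm: "\<And>k l v. x k (x l v) = x l (x k v)"
    and "w \<noteq> 0" "x k w = \<mu> *s w"
  obtains z eig where "z \<noteq> 0" "\<And>l. x l z = eig l *s z" "eig k = \<mu>"
proof -
  let ?E = "{y. x k y = \<mu> *s y}"
  have "\<exists>z\<in>?E. \<exists>eig. z \<noteq> 0 \<and> (\<forall>l\<in>UNIV. x l z = eig l *s z)"
    using assms(3,4) commuting_map_preserves_eigenspace[where f = "x k", OF lin comm]
    by (intro common_eigenvector[OF lin comm, where v = w] eigenspace_subspace lin) auto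
  then obtain z eig where "z \<in> ?E" "z \<noteq> 0" "\<And>l. x l z = eig l *s z"
    by blast
  then show ?thesis
    using that by simp
qed

lemma common_eigenvalues_idempotent:
  fixes x :: "'n::finite \<Rightarrow> complex^'m \<Rightarrow> complex^'m"
  assumes lin: "\<And>k. Vector_Spaces.linear (*s) (*s) (x k)"
    and quad: "\<And>j v. x j v = (\<Sum>i\<in>UNIV. A $ i $ j *s x i (x i v))"
    and eig: "\<And>l. x l z = eig l *s z" and "z \<noteq> 0"
  shows "evol_mult A (\<chi> l. eig l) (\<chi> l. eig l) = (\<chi> l. eig l)"
proof -
  have "(\<Sum>i\<in>UNIV. eig i * eig i * A $ i $ j) *s z = eig j *s z" for j
  proof -
    have "(\<Sum>i\<in>UNIV. eig i * eig i * A $ i $ j) *s z = (\<Sum>i\<in>UNIV. A $ i $ j *s x i (x i z))"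
      unfolding vec.scale_sum_left
      by (intro sum.cong refl) (simp add: eig vec.linear_scale[OF lin] mult_ac)
    also have "\<dots> = eig j *s z"
      using quad[of j z] by (simp add: eig)
    finally show ?thesis .
  qed
  with \<open>z \<noteq> 0\<close> have "(\<Sum>i\<in>UNIV. eig i * eig i * A $ i $ j) = eig j" for j
    by simp
  then show ?thesis
    by (simp add: evol_mult_def vec_eq_iff)
qed

theorem theorem3p5:
  fixes A :: "complex^'n^'n"
  assumes "evol_regular A"
  shows "\<exists>u :: complex^'n. u \<noteq> 0 \<and> evol_mult A u u = u"
proof -
  obtain A' where A': "A' ** A = mat 1"
    using assms unfolding evol_regular_def invertible_def by blast
  define x where "x = gen_times (transpose A')"
  have lin: "\<And>k. Vector_Spaces.linear (*s) (*s) (x k)"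
    and comm: "\<And>k l v. x k (x l v) = x l (x k v)"
    and quad: "\<And>j v. x j v = (\<Sum>i\<in>UNIV. A $ i $ j *s x i (x i v))"
    unfolding x_def by (rule linear_gen_times gen_times_commute gen_times_eq_sum_squares[OF A'])+
  have "x j (axis {} 1) \<noteq> 0" for j
    by (simp add: x_def gen_times_one axis_eq_0_iff)
  then obtain k w \<mu> where w: "w \<noteq> 0" "x k w = \<mu> *s w" and "\<mu> \<noteq> 0"
    by (rule commuting_quadratic_family_nonzero_eigenvalue[OF lin comm quad])
  from w obtain z eig where z: "z \<noteq> 0" and eig: "\<And>l. x l z = eig l *s z" and "eig k = \<mu>"
    by (rule common_eigenvector_in_eigenspace[OF lin comm]) (rule that)
  with \<open>\<mu> \<noteq> 0\<close> have "(\<chi> l. eig l) \<noteq> 0"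
    by (metis vec_lambda_beta zero_index)
  with common_eigenvalues_idempotent[OF lin quad eig z] show ?thesis
    by blast
qed

end
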